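(* For any interval exchange $f\in\mathcal{E}$, either $d(f^n)$ exhibits linear growth in $n$ or $d(f^n)$ is bounded independently of $n$.
   Context: Identify $\mathbb{T}^1=\mathbb{R}/\mathbb{Z}$ with $[0,1)$. An interval exchange transformation is a bijection of $\mathbb{T}^1$ that is a translation on each piece of some partition of $[0,1)$ into finitely many half-open intervals $[a,b)$; $\mathcal{E}$ is the group of these. $d(g)$ is the number of points at which $g$ is discontinuous as a map $\mathbb{T}^1\to\mathbb{T}^1$ with the standard circle topology. Linear growth means there is $c>0$ with $d(f^n)\ge c|n|$ for all sufficiently large $|n|$ (one always has $d(f^n)\le d(f)|n|$). *)

theory Defs
  imports "HOL-Analysis.Analysis"
begin

text \<open>The circle T^1 = R/Z is identified with [0,1). Maps of the circle are
represented by functions real => real, only their values on [0,1) matter.\<close>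

definition circ :: "real set" where
  "circ = {0..<1}"

definition cdist :: "real \<Rightarrow> real \<Rightarrow> real" where
  "cdist u v = \<bar>(u - v) - of_int (round (u - v))\<bar>"

definition iet :: "(real \<Rightarrow> real) \<Rightarrow> bool" where
  "iet f \<longleftrightarrow> bij_betw f circ circ \<and>
     (\<exists>(a::nat \<Rightarrow> real) (k::nat). a 0 = 0 \<and> a k = 1 \<and> (\<forall>i<k. a i < a (Suc i)) \<and>
        (\<forall>i<k. \<exists>c. \<forall>x\<in>{a i..<a (Suc i)}. f x = x + c))"

text \<open>g is discontinuous at x (x in [0,1)) as a map T^1 -> T^1 with the circle topology:
points near x on the circle are the reals y near x taken mod 1.\<close>
definition discont_at :: "(real \<Rightarrow> real) \<Rightarrow> real \<Rightarrow> bool" where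
  "discont_at g x \<longleftrightarrow> \<not> (((\<lambda>y. cdist (g (frac y)) (g x)) \<longlongrightarrow> 0) (at x))"

definition d :: "(real \<Rightarrow> real) \<Rightarrow> nat" where
  "d g = card {x \<in> circ. discont_at g x}"

definition ipow :: "(real \<Rightarrow> real) \<Rightarrow> int \<Rightarrow> (real \<Rightarrow> real)" where
  "ipow f n = (if 0 \<le> n then f ^^ nat n else (inv_into circ f) ^^ nat (- n))"

end

theory Submission
  imports Defs
begin

text \<open>
  An interval exchange \<open>f\<close> is a translation on a right neighbourhood and on a left
  neighbourhood of every point of the circle. From the right it is given by \<open>f\<close> itself, from
  the left by a second bijection \<open>left_limit f\<close>, which differs from \<open>f\<close> only at the finitely
  many breakpoints \<open>D\<close>. The germs of \<open>f\<^sup>n\<close> are then given by \<open>f\<^sup>n\<close> and \<open>(left_limit f)\<^sup>n\<close>,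
  so \<open>d(f\<^sup>n)\<close> is the number \<open>c(n)\<close> of points where these two iterates differ; passing to
  inverses shows \<open>d(f\<^sup>-\<^sup>n) = c(n)\<close> as well.

  A point where the \<open>n\<close>-th iterates differ visits \<open>D\<close> within \<open>n\<close> steps. Only boundedly
  many points visit \<open>D\<close> both before time \<open>n\<close> and within \<open>m\<close> steps after it, because the
  gap between two visits is at most a first return time of a point of \<open>D\<close>. Away from these
  points disagreements up to time \<open>n\<close> and between times \<open>n\<close> and \<open>n + m\<close> persist, whence
  \<open>c(n) + c(m) \<le> c(n + m) + K\<close>. Such a sequence is either bounded by \<open>K\<close> or, as soon as
  \<open>c(n\<^sub>0) > K\<close>, grows at least like \<open>n / (2 n\<^sub>0)\<close>.
\<close>

section \<open>Bijections perturbed on a finite set\<close>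

lemma funpow_eq_if_orbit_avoids:
  assumes "bij_betw T X X" and "\<And>x. x \<in> X - D \<Longrightarrow> S x = T x"
    and "x \<in> X" and "\<And>k. k < n \<Longrightarrow> (T ^^ k) x \<notin> D"
  shows "(S ^^ n) x = (T ^^ n) x"
  using assms(4)
proof (induction n)
  case (Suc n)
  have "(T ^^ n) x \<in> X"
    using bij_betw_apply[OF bij_betw_funpow[OF assms(1)] assms(3)] .
  with Suc show ?case by (simp add: assms(2))
qed simp

lemma bij_betw_if_agree_off_finite:
  assumes bij_T: "bij_betw T X X" and "inj_on S X" and "S ` X \<subseteq> X" and "finite D"
    and agree: "\<And>x. x \<in> X - D \<Longrightarrow> S x = T x"
  shows "bij_betw S X X"
proof -
  let ?D = "D \<inter> X"
  have "S ` (X - ?D) = T ` (X - ?D)" using agree by (intro image_cong) auto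
  also have "\<dots> = T ` X - T ` ?D"
    using bij_T by (intro inj_on_image_set_diff) (auto simp: bij_betw_def)
  also have "\<dots> = X - T ` ?D"
    using bij_T by (simp add: bij_betw_def)
  finally have S_outside: "S ` (X - ?D) = X - T ` ?D" .
  have "S ` ?D \<inter> S ` (X - ?D) = {}"
    using \<open>inj_on S X\<close> by (auto simp: inj_on_def)
  with S_outside \<open>S ` X \<subseteq> X\<close> have "S ` ?D \<subseteq> T ` ?D" by blast
  moreover have "card (S ` ?D) = card (T ` ?D)"
    using \<open>inj_on S X\<close> bij_T
    by (simp add: card_image inj_on_subset[of _ X] bij_betw_def)
  ultimately have "S ` ?D = T ` ?D"
    using \<open>finite D\<close> by (intro card_subset_eq) auto
  moreover have "T ` ?D \<subseteq> X" using bij_T by (auto simp: bij_betw_def)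
  moreover have "S ` X = S ` (X - ?D) \<union> S ` ?D" by blast
  ultimately have "S ` X = X" using S_outside by auto
  with \<open>inj_on S X\<close> show ?thesis by (simp add: bij_betw_def)
qed

definition visits :: "('a \<Rightarrow> 'a) \<Rightarrow> 'a set \<Rightarrow> 'a set \<Rightarrow> nat \<Rightarrow> 'a set" where
  "visits U X D n = {x \<in> X. \<exists>k<n. (U ^^ k) x \<in> D}"

lemma finite_visits:
  assumes "bij_betw U X X" and "finite D"
  shows "finite (visits U X D n)"
proof -
  have "inj_on (U ^^ k) X" for k
    using bij_betw_funpow[OF assms(1)] by (rule bij_betw_imp_inj_on)
  then have "finite (\<Union>k<n. (U ^^ k) -` D \<inter> X)"
    using assms(2) by (intro finite_UN_I finite_lessThan finite_vimage_IntI)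
  moreover have "visits U X D n = (\<Union>k<n. (U ^^ k) -` D \<inter> X)"
    by (auto simp: visits_def)
  ultimately show ?thesis by simp
qed

lemma last_visit_before:
  assumes "(U ^^ k) x \<in> D" and "k < n"
  shows "\<exists>j<n. (U ^^ j) x \<in> D \<and> (\<forall>i. j < i \<and> i < n \<longrightarrow> (U ^^ i) x \<notin> D)"
proof -
  obtain j where "j < n \<and> (U ^^ j) x \<in> D" and "\<forall>i. i < n \<and> (U ^^ i) x \<in> D \<longrightarrow> i \<le> j"
    using Nat.ex_has_greatest_nat[of "\<lambda>j. j < n \<and> (U ^^ j) x \<in> D" k n] assms by auto
  then show ?thesis by (auto simp: not_le[symmetric])
qed

lemma gap_after_last_visit_le_return:
  assumes "j < n" and last: "\<forall>i. j < i \<and> i < n \<longrightarrow> (U ^^ i) x \<notin> D"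
    and "(U ^^ n) x \<in> visits U X D m"
  shows "n - j \<le> (LEAST r. 1 \<le> r \<and> (U ^^ r) ((U ^^ j) x) \<in> D)"
    (is "_ \<le> Least ?returns")
proof -
  obtain k where "(U ^^ k) ((U ^^ n) x) \<in> D"
    using assms(3) by (auto simp: visits_def)
  moreover have "(U ^^ k) ((U ^^ n) x) = (U ^^ (k + (n - j))) ((U ^^ j) x)"
    using \<open>j < n\<close> by (simp add: funpow_add[symmetric, THEN fun_cong, simplified])
  ultimately have "?returns (k + (n - j))" using \<open>j < n\<close> by simp
  then have "?returns (Least ?returns)" by (rule LeastI)
  moreover have "(U ^^ Least ?returns) ((U ^^ j) x) = (U ^^ (Least ?returns + j)) x"
    by (simp add: funpow_add)
  ultimately have "\<not> Least ?returns + j < n"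
    using last[rule_format, of "Least ?returns + j"] by auto
  then show ?thesis by linarith
qed

lemma card_revisits_bounded:
  assumes bij: "bij_betw U X X" and fin: "finite D"
  shows "\<exists>K. \<forall>n m. card {x \<in> visits U X D n. (U ^^ n) x \<in> visits U X D m} \<le> K"
proof -
  define R where "R = Max ((\<lambda>y. LEAST r. 1 \<le> r \<and> (U ^^ r) y \<in> D) ` D)"
  \<comment> \<open>a point is recovered from its position \<open>y \<in> D\<close> at its last visit before time \<open>n\<close> and from
    the time \<open>g \<le> R\<close> elapsed since then\<close>
  have "{x \<in> visits U X D n. (U ^^ n) x \<in> visits U X D m}
      \<subseteq> (\<lambda>(y, g). inv_into X (U ^^ (n - g)) y) ` (D \<times> {1..R})" for n m
  proof
    fix x assume x: "x \<in> {x \<in> visits U X D n. (U ^^ n) x \<in> visits U X D m}"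
    then obtain k where "(U ^^ k) x \<in> D" "k < n" by (auto simp: visits_def)
    then obtain j where j: "j < n" "(U ^^ j) x \<in> D" "\<forall>i. j < i \<and> i < n \<longrightarrow> (U ^^ i) x \<notin> D"
      by (blast dest: last_visit_before)
    have "n - j \<le> (LEAST r. 1 \<le> r \<and> (U ^^ r) ((U ^^ j) x) \<in> D)"
      by (rule gap_after_last_visit_le_return[OF j(1,3)]) (use x in blast)
    also have "\<dots> \<le> R"
      unfolding R_def using fin j(2) by (intro Max_ge) auto
    finally have "n - j \<le> R" .
    moreover have "x = inv_into X (U ^^ (n - (n - j))) ((U ^^ j) x)"
      using x j(1) bij_betw_imp_inj_on[OF bij_betw_funpow[OF bij]]
      by (simp add: visits_def inv_into_f_f)
    ultimately show "x \<in> (\<lambda>(y, g). inv_into X (U ^^ (n - g)) y) ` (D \<times> {1..R})"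
      using j by (intro image_eqI[of _ _ "((U ^^ j) x, n - j)"]) auto
  qed
  then have "card {x \<in> visits U X D n. (U ^^ n) x \<in> visits U X D m} \<le> card (D \<times> {1..R})"
    for n m
    using fin card_image_le[of "D \<times> {1..R}" "\<lambda>(y, g). inv_into X (U ^^ (n - g)) y"]
    by (meson card_mono finite_SigmaI finite_atLeastAtMost finite_imageI order_trans)
  then show ?thesis by blast
qed

lemma nat_superadditive_dichotomy:
  fixes c :: "nat \<Rightarrow> nat"
  assumes superadd: "\<And>n m. c n + c m \<le> c (n + m) + K"
  shows "(\<exists>\<epsilon>>0. \<exists>N. \<forall>n\<ge>N. \<epsilon> * real n \<le> real (c n)) \<or> (\<exists>B. \<forall>n. c n \<le> B)"
proof (cases "\<forall>n. c n \<le> K")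
  case False
  then obtain n0 where n0: "K < c n0" by (auto simp: not_le)
  have "n0 \<noteq> 0"
    using superadd[of 0 0] n0 by (cases "n0 = 0") auto
  have multiple: "q * c n0 + c r \<le> c (q * n0 + r) + q * K" for q r
  proof (induction q)
    case (Suc q)
    have "c n0 + c (q * n0 + r) \<le> c (n0 + (q * n0 + r)) + K" by (rule superadd)
    with Suc show ?case by (simp add: algebra_simps)
  qed simp
  have "real n / real (2 * n0) \<le> real (c n)" if "2 * n0 \<le> n" for n
  proof -
    define q where "q = n div n0"
    have "2 \<le> q"
      using div_le_mono[OF that, of n0] \<open>n0 \<noteq> 0\<close> by (simp add: q_def)
    have "q * (K + 1) \<le> q * c n0" using n0 by (intro mult_le_mono2) simp
    also have "\<dots> \<le> c n + q * K"
      using multiple[of q "n mod n0"] by (simp add: q_def)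
    finally have "q \<le> c n" by (simp add: algebra_simps)
    have "n < (q + 1) * n0"
      using \<open>n0 \<noteq> 0\<close> by (simp add: q_def dividend_less_div_times)
    also have "\<dots> \<le> q * (2 * n0)" using \<open>2 \<le> q\<close> by simp
    finally have "real n \<le> real q * real (2 * n0)"
      by (metis less_imp_le of_nat_le_iff of_nat_mult)
    then have "real n / real (2 * n0) \<le> real q"
      using \<open>n0 \<noteq> 0\<close> by (simp add: divide_le_eq)
    with \<open>q \<le> c n\<close> show ?thesis by linarith
  qed
  then have "\<forall>n\<ge>2 * n0. 1 / real (2 * n0) * real n \<le> real (c n)" by simp
  then show ?thesis using \<open>n0 \<noteq> 0\<close> by (intro disjI1 exI[of _ "1 / real (2 * n0)"]) auto
qed blast

locale finite_perturbation =
  fixes X :: "'a set" and T S :: "'a \<Rightarrow> 'a" and D :: "'a set"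
  assumes bij_T: "bij_betw T X X" and bij_S: "bij_betw S X X" and finite_D: "finite D"
    and agree: "\<And>x. x \<in> X - D \<Longrightarrow> S x = T x"
begin

definition disagree :: "nat \<Rightarrow> 'a set" where
  "disagree n = {x \<in> X. (S ^^ n) x \<noteq> (T ^^ n) x}"

lemma disagree_subset_visits: "disagree n \<subseteq> visits T X D n \<inter> visits S X D n"
proof
  fix x assume x: "x \<in> disagree n"
  then have "x \<in> X" by (simp add: disagree_def)
  have "(S ^^ n) x = (T ^^ n) x" if "x \<notin> visits T X D n"
    using that \<open>x \<in> X\<close> by (intro funpow_eq_if_orbit_avoids[OF bij_T agree]) (auto simp: visits_def)
  moreover have "(T ^^ n) x = (S ^^ n) x" if "x \<notin> visits S X D n"
    using that \<open>x \<in> X\<close> agree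
    by (intro funpow_eq_if_orbit_avoids[OF bij_S, of D]) (auto simp: visits_def)
  moreover have "(S ^^ n) x \<noteq> (T ^^ n) x"
    using x by (simp add: disagree_def)
  ultimately show "x \<in> visits T X D n \<inter> visits S X D n" by (metis IntI)
qed

lemma finite_disagree: "finite (disagree n)"
  by (rule finite_subset[OF _ finite_visits[OF bij_T finite_D]]) (use disagree_subset_visits in blast)

lemma funpow_in_X: "x \<in> X \<Longrightarrow> (T ^^ n) x \<in> X" "x \<in> X \<Longrightarrow> (S ^^ n) x \<in> X"
  by (auto intro: bij_betw_apply bij_betw_funpow bij_T bij_S)

lemma disagree_add_from_later:
  assumes "x \<in> X - disagree n" and "(T ^^ n) x \<in> disagree m"
  shows "x \<in> disagree (n + m)"
  using assms by (simp add: disagree_def funpow_add add.commute[of n m])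

lemma disagree_add_from_earlier:
  assumes "x \<in> disagree n" and "(T ^^ n) x \<notin> disagree m" and "(S ^^ n) x \<notin> disagree m"
  shows "x \<in> disagree (n + m)"
proof -
  have x: "x \<in> X" and "(S ^^ n) x \<noteq> (T ^^ n) x"
    using assms(1) by (auto simp: disagree_def)
  moreover have "inj_on (T ^^ m) X"
    using bij_betw_funpow[OF bij_T] by (rule bij_betw_imp_inj_on)
  ultimately have "(T ^^ m) ((S ^^ n) x) \<noteq> (T ^^ m) ((T ^^ n) x)"
    using funpow_in_X by (auto dest: inj_onD)
  with assms(2,3) x show ?thesis
    by (simp add: disagree_def funpow_add add.commute[of n m] funpow_in_X)
qed

lemma card_disagree_eq_card_vimage:
  "card (disagree m) = card {x \<in> X. (T ^^ n) x \<in> disagree m}"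
proof -
  have "(T ^^ n) ` X = X"
    using bij_betw_funpow[OF bij_T] by (rule bij_betw_imp_surj_on)
  moreover have "disagree m \<subseteq> X" by (auto simp: disagree_def)
  ultimately have "(T ^^ n) ` {x \<in> X. (T ^^ n) x \<in> disagree m} = disagree m"
    by (auto simp: image_iff)
  then have "bij_betw (T ^^ n) {x \<in> X. (T ^^ n) x \<in> disagree m} (disagree m)"
    using bij_betw_funpow[OF bij_T, of n] by (rule bij_betw_subset[rotated 2]) auto
  then show ?thesis by (simp add: bij_betw_same_card)
qed

lemma card_disagree_add_ge:
  "card (disagree n) + card (disagree m) \<le> card (disagree (n + m))
     + 2 * card {x \<in> disagree n. (T ^^ n) x \<in> disagree m} + card {x \<in> disagree n. (S ^^ n) x \<in> disagree m}"
proof -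
  \<comment> \<open>\<open>A1\<close> and \<open>A2\<close> are disjoint parts of \<open>disagree (n + m)\<close>; the rest of \<open>disagree n\<close> and
    of the \<open>T\<^sup>n\<close>-preimage of \<open>disagree m\<close> lies in \<open>OT\<close> or \<open>OS\<close>\<close>
  define A1 where "A1 = {x \<in> X - disagree n. (T ^^ n) x \<in> disagree m}"
  define A2 where "A2 = {x \<in> disagree n. (T ^^ n) x \<notin> disagree m \<and> (S ^^ n) x \<notin> disagree m}"
  define OT where "OT = {x \<in> disagree n. (T ^^ n) x \<in> disagree m}"
  define OS where "OS = {x \<in> disagree n. (S ^^ n) x \<in> disagree m}"
  have "A1 \<subseteq> disagree (n + m)" "A2 \<subseteq> disagree (n + m)"
    by (auto simp: A1_def A2_def intro: disagree_add_from_later disagree_add_from_earlier)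
  moreover have "A2 \<subseteq> disagree n" "OT \<subseteq> disagree n" "OS \<subseteq> disagree n"
    by (auto simp: A2_def OT_def OS_def)
  ultimately have fin: "finite A1" "finite A2" "finite OT" "finite OS"
    by (meson finite_disagree rev_finite_subset)+
  have "card A1 + card A2 = card (A1 \<union> A2)"
    using fin by (intro card_Un_disjoint[symmetric]) (auto simp: A1_def A2_def)
  also have "\<dots> \<le> card (disagree (n + m))"
    using \<open>A1 \<subseteq> disagree (n + m)\<close> \<open>A2 \<subseteq> disagree (n + m)\<close>
    by (intro card_mono finite_disagree) auto
  finally have "card A1 + card A2 \<le> card (disagree (n + m))" .
  moreover have "card (disagree m) \<le> card A1 + card OT"
  proof -
    have "card {x \<in> X. (T ^^ n) x \<in> disagree m} \<le> card (A1 \<union> OT)"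
      using fin by (intro card_mono) (auto simp: A1_def OT_def disagree_def)
    then show ?thesis
      using card_Un_le[of A1 OT] card_disagree_eq_card_vimage[of m n] by linarith
  qed
  moreover have "card (disagree n) \<le> card A2 + card OT + card OS"
  proof -
    have "card (disagree n) \<le> card (A2 \<union> OT \<union> OS)"
      using fin by (intro card_mono) (auto simp: A2_def OT_def OS_def)
    then show ?thesis
      using card_Un_le[of "A2 \<union> OT" OS] card_Un_le[of A2 OT] by linarith
  qed
  ultimately show ?thesis by (simp add: OT_def OS_def)
qed

lemma card_disagree_superadditive:
  "\<exists>K. \<forall>n m. card (disagree n) + card (disagree m) \<le> card (disagree (n + m)) + K"
proof -
  obtain KT where KT: "\<And>n m. card {x \<in> visits T X D n. (T ^^ n) x \<in> visits T X D m} \<le> KT"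
    using card_revisits_bounded[OF bij_T finite_D] by blast
  obtain KS where KS: "\<And>n m. card {x \<in> visits S X D n. (S ^^ n) x \<in> visits S X D m} \<le> KS"
    using card_revisits_bounded[OF bij_S finite_D] by blast
  have OT: "card {x \<in> disagree n. (T ^^ n) x \<in> disagree m}
      \<le> card {x \<in> visits T X D n. (T ^^ n) x \<in> visits T X D m}" for n m
    using disagree_subset_visits finite_visits[OF bij_T finite_D] by (intro card_mono) auto
  have OS: "card {x \<in> disagree n. (S ^^ n) x \<in> disagree m}
      \<le> card {x \<in> visits S X D n. (S ^^ n) x \<in> visits S X D m}" for n m
    using disagree_subset_visits finite_visits[OF bij_S finite_D] by (intro card_mono) auto
  have "card (disagree n) + card (disagree m) \<le> card (disagree (n + m)) + (2 * KT + KS)" for n m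
    using card_disagree_add_ge[of n m] OT[of n m] OS[of n m] KT[of n m] KS[of n m] by linarith
  then show ?thesis by blast
qed

lemma card_disagree_dichotomy:
  "(\<exists>\<epsilon>>0. \<exists>N. \<forall>n\<ge>N. \<epsilon> * real n \<le> real (card (disagree n)))
     \<or> (\<exists>B. \<forall>n. card (disagree n) \<le> B)"
proof -
  obtain K where "\<And>n m. card (disagree n) + card (disagree m) \<le> card (disagree (n + m)) + K"
    using card_disagree_superadditive by blast
  then show ?thesis by (rule nat_superadditive_dichotomy)
qed

end

section \<open>Translation germs on the circle\<close>

text \<open>The representative in \<open>(0, 1]\<close> of a point of the circle: the left neighbourhoods of
  \<open>x\<close> are the intervals \<open>(upper_rep x - e, upper_rep x)\<close>.\<close>

definition upper_rep :: "real \<Rightarrow> real" where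
  "upper_rep x = (if x = 0 then 1 else x)"

definition translation_germs :: "(real \<Rightarrow> real) \<Rightarrow> (real \<Rightarrow> real) \<Rightarrow> (real \<Rightarrow> real) \<Rightarrow> bool" where
  "translation_germs g R L \<longleftrightarrow> (\<forall>x\<in>circ. R x \<in> circ \<and> L x \<in> circ \<and>
     (\<exists>e>0. \<forall>t. 0 \<le> t \<and> t < e \<longrightarrow> g (x + t) = R x + t) \<and>
     (\<exists>e>0. \<forall>t. 0 < t \<and> t < e \<longrightarrow> g (upper_rep x - t) = upper_rep (L x) - t))"

lemma upper_rep_bounds: "x \<in> circ \<Longrightarrow> 0 < upper_rep x \<and> upper_rep x \<le> 1"
  by (auto simp: upper_rep_def circ_def)

lemma translation_germs_id: "translation_germs id id id"
  unfolding translation_germs_def by (auto intro!: exI[of _ 1])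

lemma translation_germs_comp:
  assumes g: "translation_germs g R L" and h: "translation_germs h R' L'"
  shows "translation_germs (h \<circ> g) (R' \<circ> R) (L' \<circ> L)"
  unfolding translation_germs_def
proof (intro ballI conjI)
  fix x assume x: "x \<in> circ"
  then have gx: "R x \<in> circ" "L x \<in> circ" using g by (auto simp: translation_germs_def)
  then show "(R' \<circ> R) x \<in> circ" "(L' \<circ> L) x \<in> circ"
    using h by (auto simp: translation_germs_def)
  obtain e1 where "e1 > 0" "\<forall>t. 0 \<le> t \<and> t < e1 \<longrightarrow> g (x + t) = R x + t"
    using g x unfolding translation_germs_def by blast
  moreover obtain e2 where "e2 > 0" "\<forall>t. 0 \<le> t \<and> t < e2 \<longrightarrow> h (R x + t) = R' (R x) + t"
    using h gx unfolding translation_germs_def by blast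
  ultimately show "\<exists>e>0. \<forall>t. 0 \<le> t \<and> t < e \<longrightarrow> (h \<circ> g) (x + t) = (R' \<circ> R) x + t"
    by (intro exI[of _ "min e1 e2"]) auto
  obtain e1 where "e1 > 0" "\<forall>t. 0 < t \<and> t < e1 \<longrightarrow> g (upper_rep x - t) = upper_rep (L x) - t"
    using g x unfolding translation_germs_def by blast
  moreover obtain e2 where "e2 > 0"
    "\<forall>t. 0 < t \<and> t < e2 \<longrightarrow> h (upper_rep (L x) - t) = upper_rep (L' (L x)) - t"
    using h gx unfolding translation_germs_def by blast
  ultimately show "\<exists>e>0. \<forall>t. 0 < t \<and> t < e \<longrightarrow> (h \<circ> g) (upper_rep x - t) = upper_rep ((L' \<circ> L) x) - t"
    by (intro exI[of _ "min e1 e2"]) auto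
qed

lemma translation_germs_funpow:
  "translation_germs g R L \<Longrightarrow> translation_germs (g ^^ n) (R ^^ n) (L ^^ n)"
  by (induction n) (auto simp: translation_germs_id translation_germs_comp)

lemma frac_diff_eq_upper_rep:
  assumes "x \<in> circ" and "0 < t" and "t < upper_rep x"
  shows "frac (x - t) = upper_rep x - t"
proof (cases "x = 0")
  case True
  then have "\<lfloor>x - t\<rfloor> = -1" using assms by (simp add: upper_rep_def floor_eq_iff)
  with True show ?thesis by (simp add: frac_def upper_rep_def)
next
  case False
  with assms show ?thesis by (simp add: upper_rep_def circ_def frac_eq)
qed

lemma cdist_le_abs_diff_int: "cdist u v \<le> \<bar>u - v - of_int m\<bar>"
  unfolding cdist_def by (rule round_diff_minimal)

lemma abs_diff_int_ge:
  fixes z \<delta> :: real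
  assumes "\<delta> \<le> \<bar>z\<bar>" and "\<delta> \<le> 1 - \<bar>z\<bar>"
  shows "\<delta> \<le> \<bar>z - of_int m\<bar>"
proof (cases "m = 0")
  case False
  then have "1 \<le> \<bar>real_of_int m\<bar>" by linarith
  with assms(2) show ?thesis by linarith
qed (use assms in simp)

lemma continuous_at_if_germs_agree:
  assumes G: "translation_germs g R L" and x: "x \<in> circ" and eq: "L x = R x"
  shows "\<not> discont_at g x"
proof -
  obtain eR where eR: "eR > 0" "\<And>t. 0 \<le> t \<Longrightarrow> t < eR \<Longrightarrow> g (x + t) = R x + t"
    using G x by (auto simp: translation_germs_def)
  obtain eL where eL: "eL > 0" "\<And>t. 0 < t \<Longrightarrow> t < eL \<Longrightarrow> g (upper_rep x - t) = upper_rep (L x) - t"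
    using G x by (auto simp: translation_germs_def)
  have gx: "g x = R x" using eR by (metis add.right_neutral order_refl)
  define r where "r = min (min eR eL) (min (1 - x) (upper_rep x))"
  have "r > 0" using eR eL x upper_rep_bounds[OF x] by (auto simp: r_def circ_def)
  have "cdist (g (frac y)) (g x) \<le> \<bar>y - x\<bar>" if "y \<noteq> x" "dist y x < r" for y
  proof (cases "x < y")
    case True
    then have "frac y = y" "g y = R x + (y - x)"
      using that x eR(2)[of "y - x"] by (auto simp: r_def dist_real_def circ_def frac_eq)
    then show ?thesis using gx cdist_le_abs_diff_int[of "R x + (y - x)" "R x" 0] by simp
  next
    case False
    then have "frac y = upper_rep x - (x - y)" "x - y < eL"
      using that x by (auto simp: r_def dist_real_def intro!: frac_diff_eq_upper_rep[of x "x - y", simplified])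
    then have "g (frac y) = upper_rep (R x) - (x - y)"
      using False that eL(2)[of "x - y"] eq by auto
    moreover have "upper_rep (R x) - (x - y) - R x - of_int (if R x = 0 then 1 else 0) = y - x"
      by (simp add: upper_rep_def)
    ultimately show ?thesis
      using gx cdist_le_abs_diff_int[of _ _ "if R x = 0 then 1 else 0"] by (metis abs_minus_commute)
  qed
  then have "\<forall>\<^sub>F y in at x. norm (cdist (g (frac y)) (g x)) \<le> \<bar>y - x\<bar>"
    unfolding eventually_at using \<open>r > 0\<close> by (auto simp: cdist_def intro!: exI[of _ r])
  then have "((\<lambda>y. cdist (g (frac y)) (g x)) \<longlongrightarrow> 0) (at x)"
    by (rule Lim_null_comparison) (auto intro!: tendsto_eq_intros)
  then show ?thesis by (simp add: discont_at_def)
qed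

lemma discont_at_if_germs_differ:
  assumes G: "translation_germs g R L" and x: "x \<in> circ" and ne: "L x \<noteq> R x"
  shows "discont_at g x"
proof (rule ccontr)
  assume "\<not> discont_at g x"
  then have lim: "((\<lambda>y. cdist (g (frac y)) (g x)) \<longlongrightarrow> 0) (at x)"
    by (simp add: discont_at_def)
  obtain eR where "eR > 0" "\<And>t. 0 \<le> t \<Longrightarrow> t < eR \<Longrightarrow> g (x + t) = R x + t"
    using G x by (auto simp: translation_germs_def)
  then have gx: "g x = R x" by (metis add.right_neutral order_refl)
  obtain eL where eL: "eL > 0" "\<And>t. 0 < t \<Longrightarrow> t < eL \<Longrightarrow> g (upper_rep x - t) = upper_rep (L x) - t"
    using G x by (auto simp: translation_germs_def)
  have R: "R x \<in> circ" and L: "L x \<in> circ" using G x by (auto simp: translation_germs_def)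
  define w where "w = upper_rep (L x) - R x"
  have "0 < \<bar>w\<bar>" "\<bar>w\<bar> < 1"
    using ne R L upper_rep_bounds[OF L] by (auto simp: w_def upper_rep_def circ_def split: if_splits)
  define \<delta> where "\<delta> = min \<bar>w\<bar> (1 - \<bar>w\<bar>) / 2"
  have "\<delta> > 0" using \<open>0 < \<bar>w\<bar>\<close> \<open>\<bar>w\<bar> < 1\<close> by (simp add: \<delta>_def)
  obtain r where "r > 0" and r: "\<And>y. y \<noteq> x \<Longrightarrow> dist y x < r \<Longrightarrow> cdist (g (frac y)) (g x) < \<delta>"
    using tendstoD[OF lim \<open>\<delta> > 0\<close>] unfolding eventually_at by (auto simp: cdist_def)
  define t where "t = min (min r eL) (min \<delta> (upper_rep x)) / 2"
  have t: "0 < t" "t < r" "t < eL" "t < \<delta>" "t < upper_rep x"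
    using \<open>r > 0\<close> eL(1) \<open>\<delta> > 0\<close> upper_rep_bounds[OF x] by (auto simp: t_def)
  have "g (frac (x - t)) = upper_rep (L x) - t"
    using frac_diff_eq_upper_rep[OF x t(1,5)] eL(2) t by simp
  then have "cdist (upper_rep (L x) - t) (R x) < \<delta>"
    using r[of "x - t"] t gx by (simp add: dist_real_def)
  moreover have "\<delta> \<le> \<bar>(w - t) - of_int (round (w - t))\<bar>"
  proof (rule abs_diff_int_ge)
    have "\<bar>w\<bar> - t \<le> \<bar>w - t\<bar>" "\<bar>w - t\<bar> \<le> \<bar>w\<bar> + t"
      using t(1) by (auto simp: abs_if)
    then show "\<delta> \<le> \<bar>w - t\<bar>" "\<delta> \<le> 1 - \<bar>w - t\<bar>"
      using t(4) by (auto simp: \<delta>_def min_le_iff_disj)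
  qed
  ultimately show False by (simp add: cdist_def w_def algebra_simps)
qed

lemma discont_at_iff_germs_differ:
  "translation_germs g R L \<Longrightarrow> x \<in> circ \<Longrightarrow> discont_at g x \<longleftrightarrow> L x \<noteq> R x"
  using continuous_at_if_germs_agree discont_at_if_germs_differ by blast

section \<open>The germs of an interval exchange\<close>

lemma strict_partition_Ico:
  fixes a :: "nat \<Rightarrow> real"
  assumes "\<forall>i<k. a i < a (Suc i)" and "a 0 \<le> x" and "x < a k"
  shows "\<exists>i<k. a i \<le> x \<and> x < a (Suc i)"
  using assms
proof (induction k)
  case (Suc k)
  then show ?case by (cases "x < a k") (auto intro: less_SucI)
qed simp

lemma strict_partition_Ioc:
  fixes a :: "nat \<Rightarrow> real"
  assumes "\<forall>i<k. a i < a (Suc i)" and "a 0 < x" and "x \<le> a k"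
  shows "\<exists>i<k. a i < x \<and> x \<le> a (Suc i)"
  using assms
proof (induction k)
  case (Suc k)
  then show ?case by (cases "x \<le> a k") (auto intro: less_SucI)
qed simp

lemma strict_partition_nonneg:
  fixes a :: "nat \<Rightarrow> real"
  assumes "a 0 = 0" and "\<forall>i<k. a i < a (Suc i)" and "i \<le> k"
  shows "0 \<le> a i"
  using assms(3)
proof (induction i)
  case (Suc i)
  then show ?case using assms(2) by (metis Suc_le_lessD less_imp_le_nat order.strict_trans1 less_imp_le)
qed (simp add: assms(1))

lemma iet_right_germ:
  assumes "iet f" and "x \<in> circ"
  shows "\<exists>e>0. \<forall>t. 0 \<le> t \<and> t < e \<longrightarrow> f (x + t) = f x + t"
proof -
  obtain a :: "nat \<Rightarrow> real" and k where "a 0 = 0" "a k = 1" and mono: "\<forall>i<k. a i < a (Suc i)"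
    and pieces: "\<forall>i<k. \<exists>c. \<forall>x\<in>{a i..<a (Suc i)}. f x = x + c"
    using assms(1) by (auto simp: iet_def)
  then obtain i where i: "i < k" "a i \<le> x" "x < a (Suc i)"
    using strict_partition_Ico[OF mono, of x] assms(2) by (auto simp: circ_def)
  moreover obtain c where "\<forall>z\<in>{a i..<a (Suc i)}. f z = z + c" using pieces i(1) by blast
  ultimately show ?thesis by (intro exI[of _ "a (Suc i) - x"]) auto
qed

lemma iet_left_germ:
  assumes "iet f" and "x \<in> circ"
  shows "\<exists>s\<in>circ. \<exists>e>0. \<forall>t. 0 < t \<and> t < e \<longrightarrow> f (upper_rep x - t) = upper_rep s - t"
proof -
  obtain a :: "nat \<Rightarrow> real" and k where a0: "a 0 = 0" and "a k = 1" and mono: "\<forall>i<k. a i < a (Suc i)"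
    and pieces: "\<forall>i<k. \<exists>c. \<forall>x\<in>{a i..<a (Suc i)}. f x = x + c"
    and f_circ: "bij_betw f circ circ"
    using assms(1) by (auto simp: iet_def)
  define y where "y = upper_rep x"
  have y: "0 < y" "y \<le> 1" using upper_rep_bounds[OF assms(2)] by (auto simp: y_def)
  then obtain i where i: "i < k" "a i < y" "y \<le> a (Suc i)"
    using strict_partition_Ioc[OF mono, of y] a0 \<open>a k = 1\<close> by auto
  obtain c where c: "\<forall>z\<in>{a i..<a (Suc i)}. f z = z + c" using pieces i(1) by blast
  have "0 \<le> a i" using strict_partition_nonneg[OF a0 mono, of i] i(1) by simp
  define e where "e = y - a i"
  have "e > 0" using i by (simp add: e_def)
  have f_left: "f (y - t) = (y + c) - t" and in_circ: "y + c - t \<in> circ" if "0 < t" "t < e" for t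
  proof -
    show "f (y - t) = (y + c) - t" using c that i by (auto simp: e_def)
    have "y - t \<in> circ" using that y \<open>0 \<le> a i\<close> by (auto simp: e_def circ_def)
    with \<open>f (y - t) = (y + c) - t\<close> f_circ show "y + c - t \<in> circ"
      by (metis bij_betw_apply)
  qed
  \<comment> \<open>the one-sided limit \<open>y + c\<close> lies in \<open>(0, 1]\<close>, so it is \<open>upper_rep\<close> of a point of the circle\<close>
  have "0 < y + c" using in_circ[of "e / 2"] \<open>e > 0\<close> by (auto simp: circ_def)
  have "y + c \<le> 1"
  proof (rule ccontr)
    assume "\<not> y + c \<le> 1"
    define t where "t = min e (y + c - 1) / 2"
    have "0 < t" "t < e" "t < y + c - 1"
      using \<open>\<not> y + c \<le> 1\<close> \<open>e > 0\<close> by (auto simp: t_def)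
    then show False using in_circ[of t] by (auto simp: circ_def)
  qed
  define s where "s = (if y + c = 1 then 0 else y + c)"
  have "s \<in> circ" "upper_rep s = y + c"
    using \<open>0 < y + c\<close> \<open>y + c \<le> 1\<close> by (auto simp: s_def circ_def upper_rep_def)
  with f_left \<open>e > 0\<close> show ?thesis
    unfolding y_def[symmetric] by (intro bexI[of _ s] exI[of _ e]) auto
qed

definition left_limit :: "(real \<Rightarrow> real) \<Rightarrow> real \<Rightarrow> real" where
  "left_limit f x =
     (SOME s. s \<in> circ \<and> (\<exists>e>0. \<forall>t. 0 < t \<and> t < e \<longrightarrow> f (upper_rep x - t) = upper_rep s - t))"

lemma left_limit_spec:
  assumes "iet f" and "x \<in> circ"
  shows "left_limit f x \<in> circ"
    and "\<exists>e>0. \<forall>t. 0 < t \<and> t < e \<longrightarrow> f (upper_rep x - t) = upper_rep (left_limit f x) - t"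
  using someI_ex[OF iet_left_germ[OF assms, unfolded Bex_def]] by (auto simp: left_limit_def)

lemma translation_germs_iet: "iet f \<Longrightarrow> translation_germs f f (left_limit f)"
  unfolding translation_germs_def
  using left_limit_spec iet_right_germ by (auto simp: iet_def intro: bij_betw_apply)

lemma iet_left_limit_eq_off_finite:
  assumes "iet f"
  shows "\<exists>D. finite D \<and> (\<forall>x\<in>circ - D. left_limit f x = f x)"
proof -
  obtain a :: "nat \<Rightarrow> real" and k where a0: "a 0 = 0" and "a k = 1" and mono: "\<forall>i<k. a i < a (Suc i)"
    and pieces: "\<forall>i<k. \<exists>c. \<forall>x\<in>{a i..<a (Suc i)}. f x = x + c"
    and f_circ: "bij_betw f circ circ"
    using assms by (auto simp: iet_def)
  have "left_limit f x = f x" if x: "x \<in> circ - a ` {..k}" for x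
  proof -
    obtain i where i: "i < k" "a i \<le> x" "x < a (Suc i)"
      using strict_partition_Ico[OF mono, of x] x a0 \<open>a k = 1\<close> by (auto simp: circ_def)
    moreover have "a i \<noteq> x" using x i(1) by auto
    ultimately have "a i < x" by simp
    obtain c where c: "\<forall>z\<in>{a i..<a (Suc i)}. f z = z + c" using pieces i(1) by blast
    have "x \<noteq> 0" using x a0 by force
    obtain e where "e > 0" and e: "\<forall>t. 0 < t \<and> t < e \<longrightarrow> f (x - t) = upper_rep (left_limit f x) - t"
      using left_limit_spec(2)[OF assms, of x] x \<open>x \<noteq> 0\<close> by (auto simp: upper_rep_def)
    define t where "t = min e (x - a i) / 2"
    have "0 < t" "t < e" "t < x - a i" using \<open>e > 0\<close> \<open>a i < x\<close> by (auto simp: t_def)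
    then have "upper_rep (left_limit f x) = f x"
      using c e i by force
    moreover have "f x \<in> circ" "left_limit f x \<in> circ"
      using x f_circ left_limit_spec(1)[OF assms] by (auto intro: bij_betw_apply)
    ultimately show ?thesis by (auto simp: upper_rep_def circ_def split: if_splits)
  qed
  then show ?thesis by blast
qed

lemma inj_on_left_limit:
  assumes "iet f"
  shows "inj_on (left_limit f) circ"
proof (rule inj_onI)
  fix x x' assume x: "x \<in> circ" and x': "x' \<in> circ" and eq: "left_limit f x = left_limit f x'"
  obtain e e' where "e > 0" "e' > 0"
    and e: "\<forall>t. 0 < t \<and> t < e \<longrightarrow> f (upper_rep x - t) = upper_rep (left_limit f x) - t"
    and e': "\<forall>t. 0 < t \<and> t < e' \<longrightarrow> f (upper_rep x' - t) = upper_rep (left_limit f x') - t"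
    using left_limit_spec(2)[OF assms x] left_limit_spec(2)[OF assms x'] by blast
  have bounds: "0 < upper_rep x" "upper_rep x \<le> 1" "0 < upper_rep x'" "upper_rep x' \<le> 1"
    using upper_rep_bounds x x' by auto
  define t where "t = min (min e e') (min (upper_rep x) (upper_rep x')) / 2"
  have t: "0 < t" "t < e" "t < e'" "t < upper_rep x" "t < upper_rep x'"
    using \<open>e > 0\<close> \<open>e' > 0\<close> bounds by (auto simp: t_def)
  then have "f (upper_rep x - t) = f (upper_rep x' - t)" using e e' eq by simp
  moreover have "upper_rep x - t \<in> circ" "upper_rep x' - t \<in> circ"
    using t bounds by (auto simp: circ_def)
  moreover have "inj_on f circ" using assms by (simp add: iet_def bij_betw_def)
  ultimately have "upper_rep x = upper_rep x'" by (auto dest: inj_onD)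
  then show "x = x'" using x x' by (auto simp: upper_rep_def circ_def split: if_splits)
qed

lemma bij_betw_left_limit:
  assumes "iet f"
  shows "bij_betw (left_limit f) circ circ"
proof -
  obtain D where "finite D" and "\<forall>x\<in>circ - D. left_limit f x = f x"
    using iet_left_limit_eq_off_finite[OF assms] by blast
  moreover have "bij_betw f circ circ" using assms by (simp add: iet_def)
  moreover have "left_limit f ` circ \<subseteq> circ" using left_limit_spec(1)[OF assms] by blast
  ultimately show ?thesis
    using bij_betw_if_agree_off_finite[OF _ inj_on_left_limit[OF assms]] by blast
qed

section \<open>Inverses and the number of discontinuities\<close>

lemma translation_germs_inv_into:
  assumes G: "translation_germs f f L"
    and bij_f: "bij_betw f circ circ" and bij_L: "bij_betw L circ circ"
  shows "translation_germs (inv_into circ f) (inv_into circ f) (inv_into circ L)"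
  unfolding translation_germs_def
proof (intro ballI conjI)
  fix y assume y: "y \<in> circ"
  have inj_f: "inj_on f circ" using bij_f by (simp add: bij_betw_def)
  define x where "x = inv_into circ f y"
  have x: "x \<in> circ" "f x = y"
    using bij_betw_apply[OF bij_betw_inv_into[OF bij_f] y] bij_betw_inv_into_right[OF bij_f y]
    by (simp_all add: x_def)
  define x' where "x' = inv_into circ L y"
  have x': "x' \<in> circ" "L x' = y"
    using bij_betw_apply[OF bij_betw_inv_into[OF bij_L] y] bij_betw_inv_into_right[OF bij_L y]
    by (simp_all add: x'_def)
  show "inv_into circ f y \<in> circ" "inv_into circ L y \<in> circ"
    using x x' by (simp_all add: x_def x'_def)
  obtain e where "e > 0" and e: "\<forall>t. 0 \<le> t \<and> t < e \<longrightarrow> f (x + t) = f x + t"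
    using G x(1) unfolding translation_germs_def by blast
  have "inv_into circ f (y + t) = inv_into circ f y + t" if "0 \<le> t" "t < min e (1 - x)" for t
  proof -
    have "x + t \<in> circ" using that x(1) by (auto simp: circ_def)
    moreover have "f (x + t) = y + t" using e that x(2) by auto
    ultimately show ?thesis using inv_into_f_eq[OF inj_f] by (simp add: x_def)
  qed
  moreover have "min e (1 - x) > 0" using \<open>e > 0\<close> x(1) by (auto simp: circ_def)
  ultimately show "\<exists>e>0. \<forall>t. 0 \<le> t \<and> t < e \<longrightarrow> inv_into circ f (y + t) = inv_into circ f y + t"
    by blast
  obtain e' where "e' > 0"
    and e': "\<forall>t. 0 < t \<and> t < e' \<longrightarrow> f (upper_rep x' - t) = upper_rep (L x') - t"
    using G x'(1) unfolding translation_germs_def by blast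
  have "inv_into circ f (upper_rep y - t) = upper_rep (inv_into circ L y) - t"
    if "0 < t" "t < min e' (upper_rep x')" for t
  proof -
    have "upper_rep x' - t \<in> circ" using that upper_rep_bounds[OF x'(1)] by (auto simp: circ_def)
    moreover have "f (upper_rep x' - t) = upper_rep y - t" using e' that x'(2) by auto
    ultimately show ?thesis using inv_into_f_eq[OF inj_f] by (simp add: x'_def)
  qed
  moreover have "min e' (upper_rep x') > 0" using \<open>e' > 0\<close> upper_rep_bounds[OF x'(1)] by simp
  ultimately show "\<exists>e>0. \<forall>t. 0 < t \<and> t < e \<longrightarrow>
      inv_into circ f (upper_rep y - t) = upper_rep (inv_into circ L y) - t"
    by blast
qed

lemma funpow_inv_into:
  assumes bij: "bij_betw U X X" and "y \<in> X"
  shows "(inv_into X U ^^ n) y = inv_into X (U ^^ n) y"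
proof -
  have inv_in: "(inv_into X U ^^ m) y \<in> X" for m
    using bij_betw_apply[OF bij_betw_funpow[OF bij_betw_inv_into[OF bij]] \<open>y \<in> X\<close>] .
  have "(U ^^ n) ((inv_into X U ^^ n) y) = y"
  proof (induction n)
    case (Suc n)
    have "U (inv_into X U ((inv_into X U ^^ n) y)) = (inv_into X U ^^ n) y"
      using bij_betw_inv_into_right[OF bij inv_in] .
    with Suc show ?case
      by (simp only: funpow_Suc_right[of n U] funpow.simps(2)[of n "inv_into X U"] comp_apply)
  qed simp
  moreover have "inj_on (U ^^ n) X"
    using bij_betw_funpow[OF bij] by (rule bij_betw_imp_inj_on)
  ultimately show ?thesis by (metis inv_into_f_eq inv_in)
qed

lemma card_disagree_inv_into:
  assumes bij_P: "bij_betw P X X" and bij_Q: "bij_betw Q X X"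
  shows "card {y \<in> X. inv_into X P y \<noteq> inv_into X Q y} = card {x \<in> X. P x \<noteq> Q x}"
proof -
  have iff: "inv_into X P (Q x) \<noteq> inv_into X Q (Q x) \<longleftrightarrow> P x \<noteq> Q x" if "x \<in> X" for x
  proof -
    have "inv_into X Q (Q x) = x"
      using bij_Q that by (simp add: bij_betw_imp_inj_on inv_into_f_f)
    moreover have "P (inv_into X P (Q x)) = Q x"
      using bij_betw_inv_into_right[OF bij_P bij_betw_apply[OF bij_Q that]] .
    moreover have "inv_into X P (P x) = x"
      using bij_P that by (simp add: bij_betw_imp_inj_on inv_into_f_f)
    ultimately show ?thesis by metis
  qed
  have "Q ` {x \<in> X. P x \<noteq> Q x} = {y \<in> X. inv_into X P y \<noteq> inv_into X Q y}"
  proof (intro equalityI subsetI)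
    fix y assume "y \<in> Q ` {x \<in> X. P x \<noteq> Q x}"
    then show "y \<in> {y \<in> X. inv_into X P y \<noteq> inv_into X Q y}"
      using iff bij_betw_apply[OF bij_Q] by blast
  next
    fix y assume y: "y \<in> {y \<in> X. inv_into X P y \<noteq> inv_into X Q y}"
    then obtain x where "x \<in> X" "y = Q x"
      using bij_betw_imp_surj_on[OF bij_Q] by blast
    with y iff show "y \<in> Q ` {x \<in> X. P x \<noteq> Q x}" by blast
  qed
  moreover have "inj_on Q {x \<in> X. P x \<noteq> Q x}"
    by (rule inj_on_subset[OF bij_betw_imp_inj_on[OF bij_Q]]) auto
  then have "card (Q ` {x \<in> X. P x \<noteq> Q x}) = card {x \<in> X. P x \<noteq> Q x}"
    by (rule card_image)
  ultimately show ?thesis by simp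
qed

lemma d_eq_card_germs_differ:
  assumes "translation_germs g R L"
  shows "d g = card {x \<in> circ. L x \<noteq> R x}"
proof -
  have "{x \<in> circ. discont_at g x} = {x \<in> circ. L x \<noteq> R x}"
    using discont_at_iff_germs_differ[OF assms] by blast
  then show ?thesis by (simp add: d_def)
qed

lemma d_ipow_iet:
  assumes "iet f"
  shows "d (ipow f n) = card {x \<in> circ. (left_limit f ^^ nat \<bar>n\<bar>) x \<noteq> (f ^^ nat \<bar>n\<bar>) x}"
proof (cases "0 \<le> n")
  case True
  then show ?thesis
    using d_eq_card_germs_differ[OF translation_germs_funpow[OF translation_germs_iet[OF assms]]]
    by (simp add: ipow_def)
next
  case False
  define m where "m = nat \<bar>n\<bar>"
  have bij_f: "bij_betw f circ circ" using assms by (simp add: iet_def)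
  have bij_L: "bij_betw (left_limit f) circ circ"
    using assms by (rule bij_betw_left_limit)
  have "d (ipow f n) = card {x \<in> circ. (inv_into circ (left_limit f) ^^ m) x \<noteq> (inv_into circ f ^^ m) x}"
    using False d_eq_card_germs_differ[OF translation_germs_funpow[OF
        translation_germs_inv_into[OF translation_germs_iet[OF assms] bij_f bij_L]]]
    by (simp add: ipow_def m_def)
  also have "\<dots> = card {x \<in> circ. inv_into circ (left_limit f ^^ m) x \<noteq> inv_into circ (f ^^ m) x}"
    by (intro arg_cong[where f = card] Collect_cong)
      (simp add: funpow_inv_into[OF bij_f] funpow_inv_into[OF bij_L] cong: conj_cong)
  also have "\<dots> = card {x \<in> circ. (left_limit f ^^ m) x \<noteq> (f ^^ m) x}"
    using bij_L bij_f by (intro card_disagree_inv_into bij_betw_funpow)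
  finally show ?thesis by (simp add: m_def)
qed

theorem theorem1p1:
  fixes f :: "real \<Rightarrow> real"
  assumes "iet f"
  shows "(\<exists>c>0. \<exists>N::nat. \<forall>n::int. \<bar>n\<bar> \<ge> int N \<longrightarrow> real (d (ipow f n)) \<ge> c * \<bar>real_of_int n\<bar>)
         \<or> (\<exists>B::nat. \<forall>n::int. d (ipow f n) \<le> B)"
proof -
  obtain D where "finite D" and "\<forall>x\<in>circ - D. left_limit f x = f x"
    using iet_left_limit_eq_off_finite[OF assms] by blast
  then interpret finite_perturbation circ f "left_limit f" D
    using assms bij_betw_left_limit by unfold_locales (auto simp: iet_def)
  have d: "d (ipow f n) = card (disagree (nat \<bar>n\<bar>))" for n
    using d_ipow_iet[OF assms] by (simp add: disagree_def)
  from card_disagree_dichotomy show ?thesis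
  proof
    assume "\<exists>\<epsilon>>0. \<exists>N. \<forall>n\<ge>N. \<epsilon> * real n \<le> real (card (disagree n))"
    then obtain \<epsilon> N where "\<epsilon> > 0" and lin: "\<And>n. N \<le> n \<Longrightarrow> \<epsilon> * real n \<le> real (card (disagree n))"
      by blast
    have "\<epsilon> * \<bar>real_of_int n\<bar> \<le> real (d (ipow f n))" if "\<bar>n\<bar> \<ge> int N" for n
      using lin[of "nat \<bar>n\<bar>"] that by (simp add: d)
    with \<open>\<epsilon> > 0\<close> show ?thesis by blast
  qed (auto simp: d)
qed

end
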